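(* Let $L$ be a finite lattice. If the only tolerances on $L$ are $\mathrm{id}_L$ and $L^2$, then $\mathsf{C}(L)=\mathsf{Pol}_{0,1}(L)$.
   Context: $L$ has bounds $0,1$; $\mathrm{id}_L=\{(x,x):x\in L\}$. An $n$-ary aggregation function on $L$ ($n\ge1$) is a nondecreasing map $A:L^n\to L$ with $A(0,\dots,0)=0$ and $A(1,\dots,1)=1$; $\mathsf{C}(L)$ is the set of all of them. Polynomials on $L$ are functions $L^n\to L$ built from projections and constants by finitely many pointwise joins and meets; $\mathsf{Pol}_{0,1}(L)$ is the set of polynomials preserving $0$ and $1$. A tolerance on $L$ is a reflexive, symmetric binary relation $T$ such that $(a,b),(c,d)\in T$ imply $(a\vee c,b\vee d),(a\wedge c,b\wedge d)\in T$. *)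

theory Defs
  imports Main
begin

text \<open>n-ary operations on a lattice are represented as functions on lists;
only their values on lists of length n matter.\<close>

definition tolerance :: "('a::lattice \<times> 'a) set \<Rightarrow> bool" where
  "tolerance T \<longleftrightarrow>
     (\<forall>x. (x, x) \<in> T) \<and>
     (\<forall>x y. (x, y) \<in> T \<longrightarrow> (y, x) \<in> T) \<and>
     (\<forall>a b c d. (a, b) \<in> T \<longrightarrow> (c, d) \<in> T \<longrightarrow>
        (sup a c, sup b d) \<in> T \<and> (inf a c, inf b d) \<in> T)"

definition aggregation :: "nat \<Rightarrow> ('a::bounded_lattice list \<Rightarrow> 'a) \<Rightarrow> bool" where
  "aggregation n A \<longleftrightarrow>
     (\<forall>xs ys. length xs = n \<longrightarrow> length ys = n \<longrightarrow>
        (\<forall>i<n. xs ! i \<le> ys ! i) \<longrightarrow> A xs \<le> A ys) \<and>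
     A (replicate n bot) = bot \<and> A (replicate n top) = top"

inductive polynomial :: "nat \<Rightarrow> ('a::lattice list \<Rightarrow> 'a) \<Rightarrow> bool" for n where
  proj: "i < n \<Longrightarrow> polynomial n (\<lambda>xs. xs ! i)"
| const: "polynomial n (\<lambda>xs. c)"
| join: "polynomial n f \<Longrightarrow> polynomial n g \<Longrightarrow> polynomial n (\<lambda>xs. sup (f xs) (g xs))"
| meet: "polynomial n f \<Longrightarrow> polynomial n g \<Longrightarrow> polynomial n (\<lambda>xs. inf (f xs) (g xs))"
| ext: "polynomial n f \<Longrightarrow> (\<forall>xs. length xs = n \<longrightarrow> g xs = f xs) \<Longrightarrow> polynomial n g"

definition pol01 :: "nat \<Rightarrow> ('a::bounded_lattice list \<Rightarrow> 'a) \<Rightarrow> bool" where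
  "pol01 n f \<longleftrightarrow> polynomial n f \<and> f (replicate n bot) = bot \<and> f (replicate n top) = top"

end

theory Submission
  imports Defs
begin

text \<open>Every polynomial is monotone, so only the converse needs work. If the only tolerances are
trivial, then for \<open>a \<noteq> b\<close> the tolerance \<open>{(r(a, b), r(b, a)) | r binary polynomial}\<close>
generated by \<open>(a, b)\<close> is all of \<open>L\<^sup>2\<close>, so some binary polynomial \<open>r\<close> has \<open>r(a, b) = 0\<close> and
\<open>r(b, a) = 1\<close>. Choosing such an \<open>r\<^sub>y\<close> for the pair \<open>(y \<sqinter> a, a)\<close>, for each of the finitely many
\<open>y\<close> with \<open>a \<not>\<le> y\<close>, the meet of the \<open>r\<^sub>y(x \<sqinter> a, y \<sqinter> a)\<close> is the threshold function
\<open>[a \<le> x]\<close> (\<open>1\<close> if \<open>a \<le> x\<close>, else \<open>0\<close>). Meets of thresholds give the indicators \<open>[c \<le> x]\<close> of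
principal filters of \<open>L\<^sup>n\<close>, and a monotone \<open>f\<close> on the finite lattice \<open>L\<^sup>n\<close> is the polynomial
\<open>\<Squnion>\<^sub>c f(c) \<sqinter> [c \<le> x]\<close>.\<close>

definition list_mono :: "nat \<Rightarrow> ('a::order list \<Rightarrow> 'b::order) \<Rightarrow> bool" where
  "list_mono n f \<longleftrightarrow>
     (\<forall>xs ys. length xs = n \<longrightarrow> length ys = n \<longrightarrow> (\<forall>i<n. xs ! i \<le> ys ! i) \<longrightarrow> f xs \<le> f ys)"

lemma aggregation_iff:
  "aggregation n A \<longleftrightarrow> list_mono n A \<and> A (replicate n bot) = bot \<and> A (replicate n top) = top"
  by (simp add: aggregation_def list_mono_def)

lemma list_monoD:
  "list_mono n f \<Longrightarrow> length xs = n \<Longrightarrow> length ys = n \<Longrightarrow> \<forall>i<n. xs ! i \<le> ys ! i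
    \<Longrightarrow> f xs \<le> f ys"
  unfolding list_mono_def by blast

lemma list_mono_polynomial:
  assumes "polynomial n f"
  shows "list_mono n f"
proof -
  have "f xs \<le> f ys"
    if "length xs = n" "length ys = n" "\<forall>i<n. xs ! i \<le> ys ! i" for xs ys
    using assms that by induction (auto intro: le_supI1 le_supI2 le_infI1 le_infI2)
  then show ?thesis unfolding list_mono_def by blast
qed

lemma polynomial_compose:
  assumes "polynomial m p" and "length qs = m" and "\<forall>q\<in>set qs. polynomial n q"
  shows "polynomial n (\<lambda>xs. p (map (\<lambda>q. q xs) qs))"
  using assms
proof (induction rule: polynomial.induct)
  case (proj i)
  then have "(\<lambda>xs. map (\<lambda>q. q xs) qs ! i) = qs ! i" by auto
  then show ?case using proj by simp
next
  case (ext f g)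
  then show ?case by simp
qed (auto intro: polynomial.const polynomial.join polynomial.meet)

definition sup_list :: "'a::bounded_lattice list \<Rightarrow> 'a" where
  "sup_list xs = foldr sup xs bot"

definition inf_list :: "'a::bounded_lattice list \<Rightarrow> 'a" where
  "inf_list xs = foldr inf xs top"

lemma sup_list_le_iff: "sup_list xs \<le> x \<longleftrightarrow> (\<forall>y\<in>set xs. y \<le> x)"
  by (induction xs) (auto simp: sup_list_def)

lemma le_inf_list_iff: "x \<le> inf_list xs \<longleftrightarrow> (\<forall>y\<in>set xs. x \<le> y)"
  by (induction xs) (auto simp: inf_list_def)

lemma polynomial_sup_list:
  "\<forall>g\<in>set gs. polynomial n g \<Longrightarrow> polynomial n (\<lambda>xs. sup_list (map (\<lambda>g. g xs) gs))"
  by (induction gs) (auto simp: sup_list_def intro: polynomial.const polynomial.join)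

lemma polynomial_inf_list:
  "\<forall>g\<in>set gs. polynomial n g \<Longrightarrow> polynomial n (\<lambda>xs. inf_list (map (\<lambda>g. g xs) gs))"
  by (induction gs) (auto simp: inf_list_def intro: polynomial.const polynomial.meet)

definition polynomial_tolerance :: "'a::lattice \<Rightarrow> 'a \<Rightarrow> ('a \<times> 'a) set" where
  "polynomial_tolerance a b = {(r [a, b], r [b, a]) | r. polynomial 2 r}"

lemma mem_polynomial_tolerance:
  "(x, y) \<in> polynomial_tolerance a b \<longleftrightarrow> (\<exists>r. polynomial 2 r \<and> x = r [a, b] \<and> y = r [b, a])"
  by (auto simp: polynomial_tolerance_def)

lemma tolerance_polynomial_tolerance: "tolerance (polynomial_tolerance a b)"
  unfolding tolerance_def mem_polynomial_tolerance
proof (intro conjI allI impI)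
  fix x :: 'a
  show "\<exists>r. polynomial 2 r \<and> x = r [a, b] \<and> x = r [b, a]"
    by (intro exI[of _ "\<lambda>_. x"]) (simp add: polynomial.const)
next
  fix x y
  assume "\<exists>r. polynomial 2 r \<and> x = r [a, b] \<and> y = r [b, a]"
  then obtain r where r: "polynomial 2 r" "x = r [a, b]" "y = r [b, a]" by blast
  have swapped: "polynomial 2 (\<lambda>xs. r [xs ! 1, xs ! 0])"
    using polynomial_compose[OF r(1), of "[\<lambda>xs. xs ! 1, \<lambda>xs. xs ! 0]" 2]
    by (simp add: polynomial.proj)
  show "\<exists>r. polynomial 2 r \<and> y = r [a, b] \<and> x = r [b, a]"
    by (intro exI[of _ "\<lambda>xs. r [xs ! 1, xs ! 0]"]) (use swapped in \<open>simp add: r\<close>)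
next
  fix x y z w
  assume "\<exists>r. polynomial 2 r \<and> x = r [a, b] \<and> y = r [b, a]"
    and "\<exists>r. polynomial 2 r \<and> z = r [a, b] \<and> w = r [b, a]"
  then obtain r s where r: "polynomial 2 r" "x = r [a, b]" "y = r [b, a]"
    and s: "polynomial 2 s" "z = s [a, b]" "w = s [b, a]" by blast
  show "\<exists>r. polynomial 2 r \<and> sup x z = r [a, b] \<and> sup y w = r [b, a]"
    by (intro exI[of _ "\<lambda>xs. sup (r xs) (s xs)"]) (simp add: r s polynomial.join)
  show "\<exists>r. polynomial 2 r \<and> inf x z = r [a, b] \<and> inf y w = r [b, a]"
    by (intro exI[of _ "\<lambda>xs. inf (r xs) (s xs)"]) (simp add: r s polynomial.meet)
qed

lemma separating_binary_polynomial:
  fixes a b :: "'a::bounded_lattice"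
  assumes trivial: "\<forall>T :: ('a \<times> 'a) set. tolerance T \<longrightarrow> T = Id \<or> T = UNIV"
    and "a \<noteq> b"
  obtains r where "polynomial 2 r" "r [a, b] = bot" "r [b, a] = top"
proof -
  have "(a, b) \<in> polynomial_tolerance a b"
    unfolding mem_polynomial_tolerance
    by (intro exI[of _ "\<lambda>xs. xs ! 0"]) (simp add: polynomial.proj)
  then have "polynomial_tolerance a b = UNIV"
    using trivial tolerance_polynomial_tolerance \<open>a \<noteq> b\<close> by blast
  then have "(bot, top) \<in> polynomial_tolerance a b" by simp
  with that show ?thesis unfolding mem_polynomial_tolerance by metis
qed

lemma separating_binary_polynomials_below:
  fixes a :: "'a::bounded_lattice"
  assumes trivial: "\<forall>T :: ('a \<times> 'a) set. tolerance T \<longrightarrow> T = Id \<or> T = UNIV"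
  obtains R where "\<And>y. \<not> a \<le> y \<Longrightarrow>
      polynomial 2 (R y) \<and> R y [inf y a, a] = bot \<and> R y [a, inf y a] = top"
proof -
  have "\<forall>y\<in>{y. \<not> a \<le> y}. \<exists>r. polynomial 2 r \<and> r [inf y a, a] = bot \<and> r [a, inf y a] = top"
  proof
    fix y assume "y \<in> {y. \<not> a \<le> y}"
    then have "inf y a \<noteq> a" by (simp add: inf.absorb_iff2)
    then show "\<exists>r. polynomial 2 r \<and> r [inf y a, a] = bot \<and> r [a, inf y a] = top"
      using separating_binary_polynomial[OF trivial] by blast
  qed
  from bchoice[OF this] obtain R where
    "\<forall>y\<in>{y. \<not> a \<le> y}. polynomial 2 (R y) \<and> R y [inf y a, a] = bot \<and> R y [a, inf y a] = top" ..
  with that show ?thesis by blast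
qed

lemma polynomial_threshold:
  fixes a :: "'a::{finite, bounded_lattice}"
  assumes trivial: "\<forall>T :: ('a \<times> 'a) set. tolerance T \<longrightarrow> T = Id \<or> T = UNIV"
    and "i < n"
  shows "polynomial n (\<lambda>xs. if a \<le> xs ! i then top else bot)"
proof -
  obtain R where R: "\<And>y. \<not> a \<le> y \<Longrightarrow>
      polynomial 2 (R y) \<and> R y [inf y a, a] = bot \<and> R y [a, inf y a] = top"
    using separating_binary_polynomials_below[OF trivial] by blast
  obtain ys where ys: "set ys = {y. \<not> a \<le> y}"
    using finite_list[of "{y. \<not> a \<le> y}"] by auto
  text \<open>\<open>Q y xs\<close> is \<open>1\<close> if \<open>a \<le> xs ! i\<close>, and \<open>0\<close> if \<open>xs ! i = y\<close> by monotonicity of \<open>R y\<close>.\<close>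
  define Q where "Q y = (\<lambda>xs. R y [inf (xs ! i) a, inf y a])" for y
  have "polynomial n (Q y)" if "\<not> a \<le> y" for y
    using polynomial_compose[OF conjunct1[OF R[OF that]],
        of "[\<lambda>xs. inf (xs ! i) a, \<lambda>_. inf y a]" n] \<open>i < n\<close>
    by (simp add: Q_def polynomial.proj polynomial.const polynomial.meet)
  then have "polynomial n (\<lambda>xs. inf_list (map (\<lambda>g. g xs) (map Q ys)))"
    by (intro polynomial_inf_list) (use ys in auto)
  moreover have "inf_list (map (\<lambda>y. Q y xs) ys) = (if a \<le> xs ! i then top else bot)" for xs
  proof (cases "a \<le> xs ! i")
    case True
    then have "Q y xs = top" if "y \<in> set ys" for y
      using R True that ys by (simp add: Q_def inf.absorb2)
    then show ?thesis
      using True le_inf_list_iff[of top "map (\<lambda>y. Q y xs) ys"] by (simp add: top_unique)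
  next
    case False
    let ?y = "xs ! i"
    have "R ?y [inf ?y a, inf ?y a] \<le> R ?y [inf ?y a, a]"
      by (rule list_monoD[OF list_mono_polynomial[of 2]])
        (use R[OF False] in \<open>auto simp: less_2_cases_iff\<close>)
    then have "Q ?y xs = bot" using R[OF False] by (simp add: Q_def bot_unique)
    moreover have "inf_list (map (\<lambda>y. Q y xs) ys) \<le> Q ?y xs"
      using le_inf_list_iff[of _ "map (\<lambda>y. Q y xs) ys"] ys False by auto
    ultimately show ?thesis using False by (simp add: bot_unique)
  qed
  ultimately show ?thesis by (simp add: comp_def)
qed

lemma inf_list_indicators:
  "inf_list (map (\<lambda>i. if P i then top else bot) is) = (if \<forall>i\<in>set is. P i then top else bot)"
  by (induction "is") (auto simp: inf_list_def)

lemma polynomial_upset_indicator: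
  fixes c :: "'a::{finite, bounded_lattice} list"
  assumes trivial: "\<forall>T :: ('a \<times> 'a) set. tolerance T \<longrightarrow> T = Id \<or> T = UNIV"
  shows "polynomial n (\<lambda>xs. if \<forall>i<n. c ! i \<le> xs ! i then top else bot)"
proof -
  have "polynomial n (\<lambda>xs. inf_list (map (\<lambda>g. g xs)
          (map (\<lambda>i xs. if c ! i \<le> xs ! i then top else bot) [0..<n])))"
    by (intro polynomial_inf_list) (auto intro: polynomial_threshold[OF trivial])
  then show ?thesis by (simp add: comp_def inf_list_indicators atLeast0LessThan Ball_def)
qed

lemma polynomial_if_list_mono:
  fixes f :: "'a::{finite, bounded_lattice} list \<Rightarrow> 'a"
  assumes trivial: "\<forall>T :: ('a \<times> 'a) set. tolerance T \<longrightarrow> T = Id \<or> T = UNIV"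
    and mono: "list_mono n f"
  shows "polynomial n f"
proof -
  have "finite {c :: 'a list. length c = n}"
    using finite_lists_length_eq[of "UNIV :: 'a set" n] by simp
  then obtain cs where cs: "set cs = {c :: 'a list. length c = n}"
    by (metis finite_list)
  define G where "G c = (\<lambda>xs. inf (f c) (if \<forall>i<n. c ! i \<le> xs ! i then top else bot))"
    for c :: "'a list"
  have P: "polynomial n (\<lambda>xs. sup_list (map (\<lambda>g. g xs) (map G cs)))"
    unfolding G_def
    by (intro polynomial_sup_list)
      (auto intro!: polynomial.meet polynomial.const polynomial_upset_indicator[OF trivial])
  have "f xs = sup_list (map (\<lambda>c. G c xs) cs)" if "length xs = n" for xs
  proof (rule antisym)
    have "G xs xs = f xs" by (simp add: G_def)
    then show "f xs \<le> sup_list (map (\<lambda>c. G c xs) cs)"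
      using sup_list_le_iff[of "map (\<lambda>c. G c xs) cs"] cs that by force
    have "G c xs \<le> f xs" if "length c = n" for c
      using list_monoD[OF mono that \<open>length xs = n\<close>] by (auto simp: G_def le_infI1)
    then show "sup_list (map (\<lambda>c. G c xs) cs) \<le> f xs"
      using cs by (simp add: sup_list_le_iff)
  qed
  then show ?thesis
    by (intro polynomial.ext[OF P]) (simp add: comp_def)
qed

theorem mainTheorem4:
  assumes "\<forall>T :: ('a::{finite, bounded_lattice} \<times> 'a) set.
             tolerance T \<longrightarrow> T = Id \<or> T = UNIV"
  shows "\<forall>n\<ge>1. \<forall>f :: 'a list \<Rightarrow> 'a. aggregation n f \<longleftrightarrow> pol01 n f"
  using list_mono_polynomial polynomial_if_list_mono[OF assms]
  by (auto simp: aggregation_iff pol01_def)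

end
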